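(* Let $G$ be an unweighted digraph of order $n$ without loops, with $b$ reciprocal pairs of edges (pairs $\{(i,j),(j,i)\}\subseteq E$), and let $0\le\tau\le1$. Then \[\det\bigl[I-t(\tau B+(1-\tau)W)\bigr]=(1-\tau^2t^2)^{\,b-n}\det M_\tau(t),\] where $M_\tau(t)=I-At+(D-\tau I)\tau t^2+(A-S)\tau^2t^3$.
   Context: $G=(V,E)$ with $V=\{1,\dots,n\}$, $m=\#E$, adjacency matrix $A$, $S=A\circ A^T$, $D=\mathrm{diag}(\mathrm{diag}(A^2))$. The line graph adjacency matrix $W\in\{0,1\}^{m\times m}$ is indexed by edges, with $W_{ef}=1$ iff the target vertex of $e$ equals the source vertex of $f$; equivalently $W=RL^T$ where $L,R\in\{0,1\}^{m\times n}$ are the source and target matrices ($L_{ej}=1$ iff $e=(j,\cdot)$, $R_{ej}=1$ iff $e=(\cdot,j)$). The Hashimoto matrix is $B=W-\Delta$, where $\Delta=W\circ W^T$ (so $\Delta_{ef}=1$ iff $f$ is the reverse edge of $e$); thus $B_{ef}=1$ iff $e=(i,j)$, $f=(j,k)$ with $k\ne i$. *)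

theory Defs
  imports "Jordan_Normal_Form.Determinant"
begin

text \<open>A digraph on the vertex set {0..<n} (vertex i+1 of the paper is i here),
  with edge set E, and a fixed enumeration es of E (distinct, set es = E)
  used to index the rows/columns of edge-indexed matrices.\<close>

definition hadamard :: "real mat \<Rightarrow> real mat \<Rightarrow> real mat" where
  "hadamard X Y = mat (dim_row X) (dim_col X) (\<lambda>(i,j). X $$ (i,j) * Y $$ (i,j))"

definition adj_mat :: "nat \<Rightarrow> (nat \<times> nat) set \<Rightarrow> real mat" where
  "adj_mat n E = mat n n (\<lambda>(i,j). if (i,j) \<in> E then 1 else 0)"

definition S_mat :: "nat \<Rightarrow> (nat \<times> nat) set \<Rightarrow> real mat" where
  "S_mat n E = hadamard (adj_mat n E) (transpose_mat (adj_mat n E))"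

definition D_mat :: "nat \<Rightarrow> (nat \<times> nat) set \<Rightarrow> real mat" where
  "D_mat n E = mat n n (\<lambda>(i,j). if i = j then (adj_mat n E * adj_mat n E) $$ (i,i) else 0)"

definition L_mat :: "nat \<Rightarrow> (nat \<times> nat) list \<Rightarrow> real mat" where
  "L_mat n es = mat (length es) n (\<lambda>(e,j). if fst (es ! e) = j then 1 else 0)"

definition R_mat :: "nat \<Rightarrow> (nat \<times> nat) list \<Rightarrow> real mat" where
  "R_mat n es = mat (length es) n (\<lambda>(e,j). if snd (es ! e) = j then 1 else 0)"

definition W_mat :: "nat \<Rightarrow> (nat \<times> nat) list \<Rightarrow> real mat" where
  "W_mat n es = R_mat n es * transpose_mat (L_mat n es)"

definition Delta_mat :: "nat \<Rightarrow> (nat \<times> nat) list \<Rightarrow> real mat" where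
  "Delta_mat n es = hadamard (W_mat n es) (transpose_mat (W_mat n es))"

definition B_mat :: "nat \<Rightarrow> (nat \<times> nat) list \<Rightarrow> real mat" where
  "B_mat n es = W_mat n es - Delta_mat n es"

definition recip_pairs :: "(nat \<times> nat) set \<Rightarrow> nat" where
  "recip_pairs E = card {p. \<exists>i j. (i,j) \<in> E \<and> (j,i) \<in> E \<and> p = {(i,j),(j,i)}}"

definition M_tau :: "nat \<Rightarrow> (nat \<times> nat) set \<Rightarrow> real \<Rightarrow> real \<Rightarrow> real mat" where
  "M_tau n E \<tau> t = 1\<^sub>m n - t \<cdot>\<^sub>m adj_mat n E
     + (\<tau> * t^2) \<cdot>\<^sub>m (D_mat n E - \<tau> \<cdot>\<^sub>m 1\<^sub>m n)
     + (\<tau>^2 * t^3) \<cdot>\<^sub>m (adj_mat n E - S_mat n E)"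

end

theory Submission
  imports Defs
begin

text \<open>Write \<open>c = \<tau> t\<close>. Since \<open>B = W - \<Delta>\<close>, the matrix is \<open>(I + c \<Delta>) - t R L\<^sup>T\<close>, and the
  reversal matrix \<open>\<Delta>\<close> only pairs each reciprocal edge with its reverse: \<open>I + c \<Delta>\<close> is, up to
  the order of the edges, block diagonal with one block \<open>[[1, c], [c, 1]]\<close> per reciprocal pair.
  So \<open>det (I + c \<Delta>) = (1 - c\<^sup>2)\<^sup>b\<close> and \<open>(I + c \<Delta>)\<^sup>-\<^sup>1 = I + c\<^sup>2/(1 - c\<^sup>2) \<Delta>\<^sup>2 - c/(1 - c\<^sup>2) \<Delta>\<close>.
  The matrix determinant lemma moves the low-rank perturbation \<open>t R L\<^sup>T\<close> to the vertex side,
  where \<open>L\<^sup>T R = A\<close>, \<open>L\<^sup>T \<Delta>\<^sup>2 R = S\<close> and \<open>L\<^sup>T \<Delta> R = D\<close>; the resulting \<open>n \<times> n\<close> matrix is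
  \<open>M\<^sub>\<tau>(t) / (1 - c\<^sup>2)\<close>.\<close>

subsection \<open>Determinant identities\<close>

lemma det_one_minus_mult_commute:
  fixes U V :: "'a :: idom mat"
  assumes U: "U \<in> carrier_mat m n" and V: "V \<in> carrier_mat n m"
  shows "det (1\<^sub>m m - U * V) = det (1\<^sub>m n - V * U)"
proof -
  have UV: "U * V \<in> carrier_mat m m" and VU: "V * U \<in> carrier_mat n n"
    using U V by auto
  have cancel: "1\<^sub>m k - A + A = 1\<^sub>m k" "A + (1\<^sub>m k - A) = 1\<^sub>m k"
    if "A \<in> carrier_mat k k" for A :: "'a mat" and k
    using that by (auto intro!: eq_matI)
  let ?T = "four_block_mat (1\<^sub>m m) U V (1\<^sub>m n)"
  \<comment> \<open>Factor \<open>?T\<close> into block triangular matrices in two ways.\<close>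
  have lower: "four_block_mat (1\<^sub>m m) U (0\<^sub>m n m) (1\<^sub>m n)
      * four_block_mat (1\<^sub>m m - U * V) (0\<^sub>m m n) V (1\<^sub>m n) = ?T"
    using U V UV by (subst mult_four_block_mat[of _ m m _ n _ n _ _ m _ n])
      (auto intro!: cong_four_block_mat simp: cancel)
  have upper: "four_block_mat (1\<^sub>m m) (0\<^sub>m m n) V (1\<^sub>m n)
      * four_block_mat (1\<^sub>m m) U (0\<^sub>m n m) (1\<^sub>m n - V * U) = ?T"
    using U V VU by (subst mult_four_block_mat[of _ m m _ n _ n _ _ m _ n])
      (auto intro!: cong_four_block_mat simp: cancel)
  have "det ?T = det (four_block_mat (1\<^sub>m m) U (0\<^sub>m n m) (1\<^sub>m n))
      * det (four_block_mat (1\<^sub>m m - U * V) (0\<^sub>m m n) V (1\<^sub>m n))"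
    unfolding lower[symmetric] using U V UV by (intro det_mult) auto
  also have "\<dots> = det (1\<^sub>m m - U * V)"
    using U V minus_carrier_mat[OF UV] by (simp add: det_four_block_mat_lower_left_zero[of _ m _ n]
      det_four_block_mat_upper_right_zero[of _ m _ n])
  moreover have "det ?T = det (four_block_mat (1\<^sub>m m) (0\<^sub>m m n) V (1\<^sub>m n))
      * det (four_block_mat (1\<^sub>m m) U (0\<^sub>m n m) (1\<^sub>m n - V * U))"
    unfolding upper[symmetric] using U V VU by (intro det_mult) auto
  moreover have "\<dots> = det (1\<^sub>m n - V * U)"
    using U V minus_carrier_mat[OF VU] by (simp add: det_four_block_mat_lower_left_zero[of _ m _ n]
      det_four_block_mat_upper_right_zero[of _ m _ n])
  ultimately show ?thesis by simp
qed

lemma matrix_determinant_lemma: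
  fixes X Y U V :: "'a :: idom mat"
  assumes X: "X \<in> carrier_mat m m" and Y: "Y \<in> carrier_mat m m" and XY: "X * Y = 1\<^sub>m m"
    and U: "U \<in> carrier_mat m n" and V: "V \<in> carrier_mat n m"
  shows "det (X - U * V) = det X * det (1\<^sub>m n - V * (Y * U))"
proof -
  have YU: "Y * U \<in> carrier_mat m n" using Y U by simp
  have "X * (Y * U) = U"
    using X Y U XY by (simp add: assoc_mult_mat[of X m m Y m U n, symmetric])
  then have "X * ((Y * U) * V) = U * V"
    using X YU V by (simp add: assoc_mult_mat[of X m m "Y * U" n V m, symmetric])
  then have "X - U * V = X * (1\<^sub>m m - (Y * U) * V)"
    using X YU V by (simp add: mult_minus_distrib_mat[of X m m _ m])
  then have "det (X - U * V) = det X * det (1\<^sub>m m - (Y * U) * V)"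
    using X YU V by (metis det_mult minus_carrier_mat mult_carrier_mat one_carrier_mat)
  also have "det (1\<^sub>m m - (Y * U) * V) = det (1\<^sub>m n - V * (Y * U))"
    by (rule det_one_minus_mult_commute[OF YU V])
  finally show ?thesis .
qed

lemma det_eq_one_if_no_off_diagonal_path:
  fixes A :: "'a :: comm_ring_1 mat"
  assumes A: "A \<in> carrier_mat n n"
    and diag: "\<And>i. i < n \<Longrightarrow> A $$ (i, i) = 1"
    and no_path: "\<And>i j k. i < n \<Longrightarrow> j < n \<Longrightarrow> k < n \<Longrightarrow> i \<noteq> j \<Longrightarrow> j \<noteq> k \<Longrightarrow>
      A $$ (i, j) = 0 \<or> A $$ (j, k) = 0"
  shows "det A = 1"
proof -
  let ?P = "{p. p permutes {0..<n}}"
  let ?term = "\<lambda>p. signof p * (\<Prod>i = 0..<n. A $$ (i, p i))"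
  \<comment> \<open>A permutation moving \<open>i\<close> also moves \<open>p i\<close>, so its term contains \<open>A(i, p i) A(p i, p (p i)) = 0\<close>.\<close>
  have "?term p = 0" if p: "p permutes {0..<n}" and "p \<noteq> id" for p
  proof -
    obtain i where i: "i < n" "p i \<noteq> i"
      using p \<open>p \<noteq> id\<close> by (metis atLeastLessThan_iff eq_id_iff permutes_not_in)
    have pi: "p i < n" and ppi: "p (p i) < n"
      using p i(1) by (simp_all add: permutes_in_image)
    have "p (p i) \<noteq> p i"
      using i(2) permutes_inj[OF p] by (metis inj_eq)
    then have "A $$ (i, p i) = 0 \<or> A $$ (p i, p (p i)) = 0"
      using no_path[OF i(1) pi ppi] i(2) by auto
    then obtain k where "k < n" "A $$ (k, p k) = 0"
      using i(1) pi by auto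
    then have "(\<Prod>i = 0..<n. A $$ (i, p i)) = 0"
      by (intro prod_zero) auto
    then show ?thesis
      by simp
  qed
  then have "(\<Sum>p\<in>{id}. ?term p) = (\<Sum>p\<in>?P. ?term p)"
    by (intro sum.mono_neutral_left) (auto simp: permutes_id finite_permutations)
  then show ?thesis
    using diag by (simp add: det_def'[OF A])
qed

subsection \<open>Matrices indexed by a list of edges\<close>

lemma sum_nth_distinct:
  assumes "distinct xs"
  shows "(\<Sum>i<length xs. f (xs ! i)) = (\<Sum>x\<in>set xs. f x)"
proof -
  have "inj_on (nth xs) {..<length xs}"
    using assms by (simp add: inj_on_def nth_eq_iff_index_eq)
  moreover have "nth xs ` {..<length xs} = set xs"
    by (auto simp: in_set_conv_nth)
  ultimately show ?thesis
    using sum.reindex[of "nth xs" "{..<length xs}" f] by simp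
qed

definition edge_mat :: "'e list \<Rightarrow> ('e \<Rightarrow> 'e \<Rightarrow> 'a) \<Rightarrow> 'a mat" where
  "edge_mat es \<phi> = mat (length es) (length es) (\<lambda>(i, j). \<phi> (es ! i) (es ! j))"

lemma edge_mat_carrier [simp]: "edge_mat es \<phi> \<in> carrier_mat (length es) (length es)"
  and dim_edge_mat [simp]: "dim_row (edge_mat es \<phi>) = length es" "dim_col (edge_mat es \<phi>) = length es"
  by (simp_all add: edge_mat_def)

lemma index_edge_mat [simp]:
  "i < length es \<Longrightarrow> j < length es \<Longrightarrow> edge_mat es \<phi> $$ (i, j) = \<phi> (es ! i) (es ! j)"
  by (simp add: edge_mat_def)

lemma edge_mat_cong:
  "(\<And>e f. e \<in> set es \<Longrightarrow> f \<in> set es \<Longrightarrow> \<phi> e f = \<psi> e f) \<Longrightarrow> edge_mat es \<phi> = edge_mat es \<psi>"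
  by (rule eq_matI) auto

lemma one_mat_eq_edge_mat:
  "distinct es \<Longrightarrow> 1\<^sub>m (length es) = edge_mat es (\<lambda>e f. if f = e then 1 else 0)"
  by (rule eq_matI) (auto simp: nth_eq_iff_index_eq)

lemma edge_mat_mult:
  fixes \<phi> \<psi> :: "'e \<Rightarrow> 'e \<Rightarrow> 'a :: comm_ring_1"
  assumes "distinct es"
  shows "edge_mat es \<phi> * edge_mat es \<psi> = edge_mat es (\<lambda>e g. \<Sum>f\<in>set es. \<phi> e f * \<psi> f g)"
proof (rule eq_matI)
  fix i j assume "i < dim_row (edge_mat es (\<lambda>e g. \<Sum>f\<in>set es. \<phi> e f * \<psi> f g))"
    and "j < dim_col (edge_mat es (\<lambda>e g. \<Sum>f\<in>set es. \<phi> e f * \<psi> f g))"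
  then show "(edge_mat es \<phi> * edge_mat es \<psi>) $$ (i, j) = edge_mat es (\<lambda>e g. \<Sum>f\<in>set es. \<phi> e f * \<psi> f g) $$ (i, j)"
    using sum_nth_distinct[OF assms, of "\<lambda>f. \<phi> (es ! i) f * \<psi> f (es ! j)"]
    by (simp add: scalar_prod_def atLeast0LessThan)
qed auto

lemma sum_two_deltas:
  fixes x y :: "'a :: comm_ring_1"
  assumes "finite A" and "e \<in> A"
  shows "(\<Sum>f\<in>A. ((if f = e then x else 0) + (if f = \<sigma> then y else 0)) * g f)
    = x * g e + (if \<sigma> \<in> A then y * g \<sigma> else 0)"
proof -
  have "(\<Sum>f\<in>A. ((if f = e then x else 0) + (if f = \<sigma> then y else 0)) * g f)
      = (\<Sum>f\<in>A. (if f = e then x * g e else 0) + (if f = \<sigma> then y * g \<sigma> else 0))"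
    by (rule sum.cong) (simp_all add: distrib_right)
  then show ?thesis
    using assms by (simp add: sum.distrib)
qed

lemma edge_mat_mult_sparse:
  fixes a b :: "'e \<Rightarrow> 'a :: comm_ring_1"
  assumes "distinct es"
  shows "edge_mat es (\<lambda>e f. (if f = e then a e else 0) + (if f = \<sigma> e then b e else 0)) * edge_mat es \<psi>
    = edge_mat es (\<lambda>e g. a e * \<psi> e g + (if \<sigma> e \<in> set es then b e * \<psi> (\<sigma> e) g else 0))"
  unfolding edge_mat_mult[OF assms]
  by (rule edge_mat_cong) (simp add: sum_two_deltas)

lemma det_edge_mat_diagonal:
  fixes d :: "'e \<Rightarrow> 'a :: comm_ring_1"
  assumes "distinct es"
  shows "det (edge_mat es (\<lambda>e f. if e = f then d e else 0)) = (\<Prod>e\<in>set es. d e)"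
proof -
  have "upper_triangular (edge_mat es (\<lambda>e f. if e = f then d e else 0))"
    using assms by (auto simp: upper_triangular_def nth_eq_iff_index_eq)
  moreover have "diag_mat (edge_mat es (\<lambda>e f. if e = f then d e else 0)) = map d es"
    by (rule nth_equalityI) (simp_all add: diag_mat_def)
  ultimately have "det (edge_mat es (\<lambda>e f. if e = f then d e else 0)) = prod_list (map d es)"
    by (simp add: det_upper_triangular[OF _ edge_mat_carrier])
  then show ?thesis
    using assms by (simp add: prod.distinct_set_conv_list)
qed

lemma det_edge_mat_one_sided_reversal:
  fixes es :: "('v \<times> 'v) list" and b :: "'v \<times> 'v \<Rightarrow> 'a :: comm_ring_1"
  assumes d: "distinct es" and swap_ne: "\<And>e. e \<in> set es \<Longrightarrow> prod.swap e \<noteq> e"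
    and one_sided: "\<And>e. e \<in> set es \<Longrightarrow> b e \<noteq> 0 \<Longrightarrow> b (prod.swap e) = 0"
  shows "det (edge_mat es (\<lambda>e f. (if f = e then 1 else 0) + (if f = prod.swap e then b e else 0))) = 1"
proof (rule det_eq_one_if_no_off_diagonal_path[OF edge_mat_carrier])
  fix i assume "i < length es"
  then show "edge_mat es (\<lambda>e f. (if f = e then 1 else 0) + (if f = prod.swap e then b e else 0)) $$ (i, i) = 1"
    using swap_ne[of "es ! i"] by simp
next
  fix i j k assume ijk: "i < length es" "j < length es" "k < length es" "i \<noteq> j" "j \<noteq> k"
  then have "es ! j \<noteq> es ! i" "es ! k \<noteq> es ! j"
    using d by (simp_all add: nth_eq_iff_index_eq)
  then show "edge_mat es (\<lambda>e f. (if f = e then 1 else 0) + (if f = prod.swap e then b e else 0)) $$ (i, j) = 0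
    \<or> edge_mat es (\<lambda>e f. (if f = e then 1 else 0) + (if f = prod.swap e then b e else 0)) $$ (j, k) = 0"
    using ijk one_sided[of "es ! i"] by auto
qed

lemma det_edge_mat_one_plus_reversal:
  fixes es :: "('v :: linorder \<times> 'v) list" and c :: "'a :: comm_ring_1"
  assumes d: "distinct es" and loopless: "\<And>e. e \<in> set es \<Longrightarrow> fst e \<noteq> snd e"
  shows "det (edge_mat es (\<lambda>e f. (if f = e then 1 else 0) + (if f = prod.swap e then c else 0)))
    = (1 - c^2) ^ card {e \<in> set es. fst e < snd e \<and> prod.swap e \<in> set es}"
proof -
  have swap_ne: "prod.swap e \<noteq> e" if "e \<in> set es" for e
    using loopless[OF that] by (cases e) auto
  define X where "X = edge_mat es (\<lambda>e f. (if f = e then 1 else 0) + (if f = prod.swap e then c else 0))"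
  \<comment> \<open>\<open>U\<close> and \<open>U'\<close> clear the off-diagonal entries in the rows of the edges with \<open>fst e < snd e\<close>
    and in the columns of the edges with \<open>fst e > snd e\<close>.\<close>
  define U where "U = edge_mat es (\<lambda>e f. (if f = e then 1 else 0)
    + (if f = prod.swap e then (if fst e < snd e then - c else 0) else 0))"
  define U' where "U' = edge_mat es (\<lambda>e f. (if f = e then 1 else 0)
    + (if f = prod.swap e then (if snd e < fst e then - c else 0) else 0))"
  define D where "D = edge_mat es (\<lambda>e f. if e = f
    then (if fst e < snd e \<and> prod.swap e \<in> set es then 1 - c^2 else 1) else 0)"
  have "U * (X * U') = D"
    unfolding U_def X_def U'_def D_def edge_mat_mult_sparse[OF d]
    apply (rule edge_mat_cong)
    subgoal for e g
      using swap_ne[of e] loopless[of e]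
      by (cases "g = e"; cases "g = prod.swap e"; cases "prod.swap e \<in> set es"; cases "fst e < snd e")
        (auto simp: power2_eq_square)
    done
  moreover have "U \<in> carrier_mat (length es) (length es)" "X \<in> carrier_mat (length es) (length es)"
    "U' \<in> carrier_mat (length es) (length es)"
    by (simp_all add: U_def X_def U'_def)
  ultimately have "det D = det U * (det X * det U')"
    by (metis det_mult mult_carrier_mat)
  moreover have "det U = 1" "det U' = 1"
    unfolding U_def U'_def
    by (rule det_edge_mat_one_sided_reversal[OF d swap_ne]; auto split: if_splits dest: order.asym)+
  moreover have "det D = (\<Prod>e\<in>set es. if fst e < snd e \<and> prod.swap e \<in> set es then 1 - c^2 else 1)"
    unfolding D_def by (rule det_edge_mat_diagonal[OF d])
  ultimately show ?thesis
    by (simp add: X_def prod.inter_filter[symmetric])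
qed

lemma edge_mat_one_plus_reversal_inverse:
  fixes es :: "('v \<times> 'v) list" and c :: "'a :: field"
  assumes d: "distinct es" and swap_ne: "\<And>e. e \<in> set es \<Longrightarrow> prod.swap e \<noteq> e"
    and q: "1 - c^2 \<noteq> 0"
  shows "edge_mat es (\<lambda>e f. (if f = e then 1 else 0) + (if f = prod.swap e then c else 0))
    * edge_mat es (\<lambda>e f. (if f = e then 1 + c^2 / (1 - c^2) * (if prod.swap e \<in> set es then 1 else 0) else 0)
        + (if f = prod.swap e then - c / (1 - c^2) else 0))
    = 1\<^sub>m (length es)"
proof -
  have "1 + c^2 / (1 - c^2) + c * (- c / (1 - c^2)) = 1"
    and "- c / (1 - c^2) + c * (1 + c^2 / (1 - c^2)) = 0"
    using q by (simp_all add: field_simps power2_eq_square)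
  then show ?thesis
    unfolding edge_mat_mult_sparse[OF d] one_mat_eq_edge_mat[OF d]
    apply (intro edge_mat_cong)
    subgoal for e g
      using swap_ne[of e] by (cases "g = e"; cases "g = prod.swap e"; cases "prod.swap e \<in> set es") auto
    done
qed

subsection \<open>Edge and vertex matrices of a digraph\<close>

lemma W_mat_eq_edge_mat:
  assumes "set es \<subseteq> {0..<n} \<times> {0..<n}"
  shows "W_mat n es = edge_mat es (\<lambda>e f. if snd e = fst f then 1 else 0)"
proof (rule eq_matI)
  fix i j assume "i < dim_row (edge_mat es (\<lambda>e f. if snd e = fst f then 1 else 0 :: real))"
    and "j < dim_col (edge_mat es (\<lambda>e f. if snd e = fst f then 1 else 0 :: real))"
  then have ij: "i < length es" "j < length es" by simp_all
  then have "snd (es ! i) < n"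
    using assms nth_mem by fastforce
  then have "(\<Sum>k\<in>{0..<n}. (if snd (es ! i) = k then 1 else 0) * (if fst (es ! j) = k then 1 else 0))
      = (\<Sum>k\<in>{0..<n}. if k = snd (es ! i) then (if snd (es ! i) = fst (es ! j) then 1 else (0 :: real)) else 0)"
    by (intro sum.cong) auto
  also have "\<dots> = (if snd (es ! i) = fst (es ! j) then 1 else 0)"
    using \<open>snd (es ! i) < n\<close> by simp
  finally show "W_mat n es $$ (i, j) = edge_mat es (\<lambda>e f. if snd e = fst f then 1 else 0) $$ (i, j)"
    using ij by (simp add: W_mat_def R_mat_def L_mat_def scalar_prod_def)
qed (simp_all add: W_mat_def R_mat_def L_mat_def)

lemma Delta_mat_eq_edge_mat:
  assumes "set es \<subseteq> {0..<n} \<times> {0..<n}"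
  shows "Delta_mat n es = edge_mat es (\<lambda>e f. if f = prod.swap e then 1 else 0)"
  unfolding Delta_mat_def hadamard_def W_mat_eq_edge_mat[OF assms]
  by (rule eq_matI) (auto simp: prod_eq_iff)

lemma one_minus_interpolated_Hashimoto_eq:
  assumes d: "distinct es" and E: "set es \<subseteq> {0..<n} \<times> {0..<n}"
  shows "1\<^sub>m (length es) - t \<cdot>\<^sub>m (\<tau> \<cdot>\<^sub>m B_mat n es + (1 - \<tau>) \<cdot>\<^sub>m W_mat n es)
    = edge_mat es (\<lambda>e f. (if f = e then 1 else 0) + (if f = prod.swap e then \<tau> * t else 0))
      - (t \<cdot>\<^sub>m R_mat n es) * transpose_mat (L_mat n es)"
proof -
  have "(t \<cdot>\<^sub>m R_mat n es) * transpose_mat (L_mat n es) = t \<cdot>\<^sub>m W_mat n es"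
    unfolding W_mat_def by (rule mult_smult_assoc_mat) (auto simp: R_mat_def L_mat_def)
  then show ?thesis
    unfolding B_mat_def W_mat_eq_edge_mat[OF E] Delta_mat_eq_edge_mat[OF E] one_mat_eq_edge_mat[OF d]
    by (intro eq_matI) (auto simp: algebra_simps)
qed

lemma L_mat_transpose_edge_mat_R_mat:
  assumes d: "distinct es"
  shows "transpose_mat (L_mat n es) * (edge_mat es \<phi> * R_mat n es) = mat n n (\<lambda>(i, j).
    \<Sum>e\<in>set es. \<Sum>f\<in>set es. (if fst e = i then 1 else 0) * \<phi> e f * (if snd f = j then 1 else 0))"
proof (rule eq_matI)
  fix i j assume "i < dim_row (mat n n (\<lambda>(i, j).
    \<Sum>e\<in>set es. \<Sum>f\<in>set es. (if fst e = i then 1 else 0) * \<phi> e f * (if snd f = j then 1 else 0)))"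
    and "j < dim_col (mat n n (\<lambda>(i, j).
    \<Sum>e\<in>set es. \<Sum>f\<in>set es. (if fst e = i then 1 else 0) * \<phi> e f * (if snd f = j then 1 else 0)))"
  then have ij: "i < n" "j < n" by simp_all
  have col: "(edge_mat es \<phi> * R_mat n es) $$ (k, j)
      = (\<Sum>f\<in>set es. \<phi> (es ! k) f * (if snd f = j then 1 else 0))" if "k < length es" for k
    using that ij sum_nth_distinct[OF d, of "\<lambda>f. \<phi> (es ! k) f * (if snd f = j then 1 else 0)"]
    by (simp add: R_mat_def scalar_prod_def atLeast0LessThan)
  have "(transpose_mat (L_mat n es) * (edge_mat es \<phi> * R_mat n es)) $$ (i, j)
      = (\<Sum>k<length es. (if fst (es ! k) = i then 1 else 0) * (edge_mat es \<phi> * R_mat n es) $$ (k, j))"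
    using ij by (simp add: L_mat_def R_mat_def scalar_prod_def atLeast0LessThan)
  also have "\<dots> = (\<Sum>k<length es. (if fst (es ! k) = i then 1 else 0)
      * (\<Sum>f\<in>set es. \<phi> (es ! k) f * (if snd f = j then 1 else 0)))"
    by (intro sum.cong) (simp_all add: col)
  also have "\<dots> = (\<Sum>e\<in>set es. (if fst e = i then 1 else 0)
      * (\<Sum>f\<in>set es. \<phi> e f * (if snd f = j then 1 else 0)))"
    by (rule sum_nth_distinct[OF d])
  finally show "(transpose_mat (L_mat n es) * (edge_mat es \<phi> * R_mat n es)) $$ (i, j) = mat n n (\<lambda>(i, j).
    \<Sum>e\<in>set es. \<Sum>f\<in>set es. (if fst e = i then 1 else 0) * \<phi> e f * (if snd f = j then 1 else 0)) $$ (i, j)"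
    using ij by (simp add: sum_distrib_left mult.assoc)
qed (simp_all add: L_mat_def R_mat_def)

lemma D_mat_carrier: "D_mat n E \<in> carrier_mat n n"
  by (simp add: D_mat_def)

lemma D_mat_index:
  assumes E: "E \<subseteq> {0..<n} \<times> {0..<n}" and i: "i < n" and j: "j < n"
  shows "D_mat n E $$ (i, j) = (if i = j then real (card {e \<in> E. fst e = i \<and> prod.swap e \<in> E}) else 0)"
proof -
  have "{e \<in> E. fst e = i \<and> prod.swap e \<in> E} = Pair i ` {k \<in> {0..<n}. (i, k) \<in> E \<and> (k, i) \<in> E}"
    using E by force
  then have "card {e \<in> E. fst e = i \<and> prod.swap e \<in> E} = card {k \<in> {0..<n}. (i, k) \<in> E \<and> (k, i) \<in> E}"
    by (simp add: card_image inj_on_def)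
  moreover have "(adj_mat n E * adj_mat n E) $$ (i, i)
      = (\<Sum>k\<in>{0..<n}. if (i, k) \<in> E \<and> (k, i) \<in> E then 1 else 0)"
    using i by (auto simp: adj_mat_def scalar_prod_def intro!: sum.cong)
  moreover have "(\<Sum>k\<in>{0..<n}. if (i, k) \<in> E \<and> (k, i) \<in> E then 1 else 0)
      = real (card {k \<in> {0..<n}. (i, k) \<in> E \<and> (k, i) \<in> E})"
    by (simp add: sum.inter_filter[symmetric])
  ultimately show ?thesis
    using i j by (cases "i = j") (simp_all add: D_mat_def)
qed

lemma L_mat_transpose_reversal_R_mat:
  fixes \<alpha> \<beta> :: real
  assumes d: "distinct es" and E: "set es \<subseteq> {0..<n} \<times> {0..<n}"
  shows "transpose_mat (L_mat n es) * (edge_mat es (\<lambda>e f.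
      (if f = e then 1 + \<beta> * (if prod.swap e \<in> set es then 1 else 0) else 0)
      + (if f = prod.swap e then \<alpha> else 0)) * R_mat n es)
    = adj_mat n (set es) + \<beta> \<cdot>\<^sub>m S_mat n (set es) + \<alpha> \<cdot>\<^sub>m D_mat n (set es)"
  (is "_ = ?K")
  unfolding L_mat_transpose_edge_mat_R_mat[OF d]
proof (rule eq_matI)
  let ?E = "set es"
  fix i j assume "i < dim_row ?K" and "j < dim_col ?K"
  then have ij: "i < n" "j < n"
    using D_mat_carrier[of n ?E] by simp_all
  let ?a = "\<lambda>e. 1 + \<beta> * (if prod.swap e \<in> ?E then 1 else 0)"
  have "(\<Sum>e\<in>?E. \<Sum>f\<in>?E. (if fst e = i then 1 else 0)
      * ((if f = e then ?a e else 0) + (if f = prod.swap e then \<alpha> else 0)) * (if snd f = j then 1 else 0))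
    = (\<Sum>e\<in>?E. (if fst e = i then 1 else 0) * (\<Sum>f\<in>?E.
      ((if f = e then ?a e else 0) + (if f = prod.swap e then \<alpha> else 0)) * (if snd f = j then 1 else 0)))"
    by (simp add: sum_distrib_left mult.assoc)
  also have "\<dots> = (\<Sum>e\<in>?E. (if fst e = i then 1 else 0) * (?a e * (if snd e = j then 1 else 0)
      + (if prod.swap e \<in> ?E then \<alpha> * (if fst e = j then 1 else 0) else 0)))"
    by (intro sum.cong refl) (simp add: sum_two_deltas)
  also have "\<dots> = (\<Sum>e\<in>?E. (if e = (i, j) then 1 + \<beta> * (if (j, i) \<in> ?E then 1 else 0) else 0)
      + (if fst e = i \<and> prod.swap e \<in> ?E then (if i = j then \<alpha> else 0) else 0))"
    by (intro sum.cong refl) (auto simp: prod_eq_iff)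
  also have "\<dots> = (if (i, j) \<in> ?E then 1 + \<beta> * (if (j, i) \<in> ?E then 1 else 0) else 0)
      + (if i = j then \<alpha> * real (card {e \<in> ?E. fst e = i \<and> prod.swap e \<in> ?E}) else 0)"
    by (simp add: sum.distrib sum.inter_filter[symmetric])
  finally show "mat n n (\<lambda>(i, j). \<Sum>e\<in>?E. \<Sum>f\<in>?E. (if fst e = i then 1 else 0)
      * ((if f = e then ?a e else 0) + (if f = prod.swap e then \<alpha> else 0)) * (if snd f = j then 1 else 0)) $$ (i, j)
    = ?K $$ (i, j)"
    using ij D_mat_index[OF E ij]
    by (simp add: adj_mat_def S_mat_def hadamard_def D_mat_def)
qed (use D_mat_carrier[of n "set es"] in \<open>simp_all add: adj_mat_def\<close>)

lemma M_tau_eq_smult: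
  fixes \<tau> t :: real
  assumes q: "1 - (\<tau> * t)^2 \<noteq> 0"
  shows "M_tau n E \<tau> t = (1 - (\<tau> * t)^2) \<cdot>\<^sub>m (1\<^sub>m n - t \<cdot>\<^sub>m (adj_mat n E
    + ((\<tau> * t)^2 / (1 - (\<tau> * t)^2)) \<cdot>\<^sub>m S_mat n E + (- (\<tau> * t) / (1 - (\<tau> * t)^2)) \<cdot>\<^sub>m D_mat n E))"
    (is "_ = ?R")
proof -
  have carrier: "adj_mat n E \<in> carrier_mat n n" "S_mat n E \<in> carrier_mat n n" "D_mat n E \<in> carrier_mat n n"
    by (simp_all add: adj_mat_def S_mat_def hadamard_def D_mat_carrier)
  show ?thesis
  proof (rule eq_matI)
    fix i j assume "i < dim_row ?R" and "j < dim_col ?R"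
    then have ij: "i < n" "j < n"
      using carrier by simp_all
    define a s d where "a = adj_mat n E $$ (i, j)" and "s = S_mat n E $$ (i, j)" and "d = D_mat n E $$ (i, j)"
    define \<delta> :: real where "\<delta> = (if i = j then 1 else 0)"
    define c where "c = \<tau> * t"
    define q where "q = 1 - c^2"
    have "M_tau n E \<tau> t $$ (i, j) = \<delta> - t * a + \<tau> * t^2 * (d - \<tau> * \<delta>) + \<tau>^2 * t^3 * (a - s)"
      using ij carrier by (simp add: M_tau_def a_def s_def d_def \<delta>_def)
    also have "\<dots> = q * \<delta> - q * t * a - t * c^2 * s + t * c * d"
      by (simp add: q_def c_def algebra_simps power2_eq_square power3_eq_cube)
    also have "\<dots> = q * (\<delta> - t * (a + c^2 / q * s + - c / q * d))"
      using q by (simp add: q_def[symmetric] c_def[symmetric] field_simps)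
    finally show "M_tau n E \<tau> t $$ (i, j) = ?R $$ (i, j)"
      using ij carrier by (simp add: a_def s_def d_def \<delta>_def q_def c_def)
  qed (use carrier in \<open>simp_all add: M_tau_def\<close>)
qed

lemma card_ordered_reciprocal_edges:
  assumes loopless: "\<forall>i. (i, i) \<notin> E"
  shows "card {e \<in> E. fst e < snd e \<and> prod.swap e \<in> E} = recip_pairs E"
proof -
  let ?A = "{e \<in> E. fst e < snd e \<and> prod.swap e \<in> E}"
  have "inj_on (\<lambda>e. {e, prod.swap e}) ?A"
  proof (rule inj_onI)
    fix e e' assume "e \<in> ?A" "e' \<in> ?A" and "{e, prod.swap e} = {e', prod.swap e'}"
    then show "e = e'"
      by (cases e; cases e') (auto simp: doubleton_eq_iff)
  qed
  moreover have "(\<lambda>e. {e, prod.swap e}) ` ?A = {p. \<exists>i j. (i, j) \<in> E \<and> (j, i) \<in> E \<and> p = {(i, j), (j, i)}}"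
  proof (intro equalityI subsetI)
    fix p assume "p \<in> {p. \<exists>i j. (i, j) \<in> E \<and> (j, i) \<in> E \<and> p = {(i, j), (j, i)}}"
    then obtain i j where ij: "(i, j) \<in> E" "(j, i) \<in> E" "p = {(i, j), (j, i)}"
      by auto
    then have "i < j \<or> j < i"
      using loopless by (cases "i < j") auto
    then show "p \<in> (\<lambda>e. {e, prod.swap e}) ` ?A"
    proof
      assume "i < j"
      then show ?thesis using ij by (intro image_eqI[of _ _ "(i, j)"]) auto
    next
      assume "j < i"
      then show ?thesis using ij by (intro image_eqI[of _ _ "(j, i)"]) auto
    qed
  qed force
  ultimately show ?thesis
    unfolding recip_pairs_def by (simp add: card_image[symmetric])
qed

lemma det_one_minus_interpolated_Hashimoto:
  fixes \<tau> t :: real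
  assumes d: "distinct es" and E: "set es \<subseteq> {0..<n} \<times> {0..<n}"
    and loopless: "\<forall>i. (i, i) \<notin> set es" and q: "1 - (\<tau> * t)^2 \<noteq> 0"
  shows "det (1\<^sub>m (length es) - t \<cdot>\<^sub>m (\<tau> \<cdot>\<^sub>m B_mat n es + (1 - \<tau>) \<cdot>\<^sub>m W_mat n es))
    = (1 - (\<tau> * t)^2) ^ recip_pairs (set es) * det (1\<^sub>m n - t \<cdot>\<^sub>m (adj_mat n (set es)
      + ((\<tau> * t)^2 / (1 - (\<tau> * t)^2)) \<cdot>\<^sub>m S_mat n (set es)
      + (- (\<tau> * t) / (1 - (\<tau> * t)^2)) \<cdot>\<^sub>m D_mat n (set es)))"
proof -
  define c where "c = \<tau> * t"
  define q where "q = 1 - c^2"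
  have fst_ne_snd: "fst e \<noteq> snd e" if "e \<in> set es" for e
    using that loopless by (metis prod.collapse)
  have swap_ne: "prod.swap e \<noteq> e" if "e \<in> set es" for e
    using fst_ne_snd[OF that] by (metis fst_swap)
  define X where "X = edge_mat es (\<lambda>e f. (if f = e then 1 else 0) + (if f = prod.swap e then c else 0))"
  define Y where "Y = edge_mat es (\<lambda>e f.
    (if f = e then 1 + c^2 / q * (if prod.swap e \<in> set es then 1 else 0) else 0)
    + (if f = prod.swap e then - c / q else 0))"
  let ?L = "transpose_mat (L_mat n es)" and ?R = "R_mat n es"
  have carrier: "X \<in> carrier_mat (length es) (length es)" "Y \<in> carrier_mat (length es) (length es)"
    "?R \<in> carrier_mat (length es) n" "?L \<in> carrier_mat n (length es)"
    by (simp_all add: X_def Y_def R_mat_def L_mat_def)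
  have "X * Y = 1\<^sub>m (length es)"
    unfolding X_def Y_def q_def using q
    by (intro edge_mat_one_plus_reversal_inverse[OF d swap_ne]) (simp_all add: c_def)
  then have "det (X - (t \<cdot>\<^sub>m ?R) * ?L) = det X * det (1\<^sub>m n - ?L * (Y * (t \<cdot>\<^sub>m ?R)))"
    using carrier by (intro matrix_determinant_lemma) auto
  also have "?L * (Y * (t \<cdot>\<^sub>m ?R)) = t \<cdot>\<^sub>m (?L * (Y * ?R))"
    using carrier by (simp add: mult_smult_distrib[OF carrier(2,3)]
      mult_smult_distrib[OF carrier(4) mult_carrier_mat[OF carrier(2,3)]])
  also have "?L * (Y * ?R) = adj_mat n (set es) + (c^2 / q) \<cdot>\<^sub>m S_mat n (set es) + (- c / q) \<cdot>\<^sub>m D_mat n (set es)"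
    unfolding Y_def by (rule L_mat_transpose_reversal_R_mat[OF d E])
  also have "det X = q ^ recip_pairs (set es)"
    using det_edge_mat_one_plus_reversal[OF d fst_ne_snd, of c]
    unfolding X_def q_def card_ordered_reciprocal_edges[OF loopless] .
  finally show ?thesis
    unfolding one_minus_interpolated_Hashimoto_eq[OF d E] X_def q_def c_def by simp
qed

theorem theorem4p9:
  fixes n :: nat and E :: "(nat \<times> nat) set" and es :: "(nat \<times> nat) list"
    and \<tau> t :: real
  assumes "E \<subseteq> {0..<n} \<times> {0..<n}"
    and "\<forall>i. (i,i) \<notin> E"
    and "distinct es" and "set es = E"
    and "0 \<le> \<tau>" and "\<tau> \<le> 1"
    and "1 - \<tau>^2 * t^2 \<noteq> 0"
  shows "det (1\<^sub>m (length es) - t \<cdot>\<^sub>m (\<tau> \<cdot>\<^sub>m B_mat n es + (1 - \<tau>) \<cdot>\<^sub>m W_mat n es))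
       = (1 - \<tau>^2 * t^2) powi (int (recip_pairs E) - int n) * det (M_tau n E \<tau> t)"
proof -
  have q: "1 - \<tau>^2 * t^2 = 1 - (\<tau> * t)^2"
    by (simp add: power_mult_distrib)
  then have "1 - (\<tau> * t)^2 \<noteq> 0"
    using assms(7) by simp
  then show ?thesis
    using det_one_minus_interpolated_Hashimoto[OF assms(3) _ _ \<open>1 - (\<tau> * t)^2 \<noteq> 0\<close>, of n]
      M_tau_eq_smult[OF \<open>1 - (\<tau> * t)^2 \<noteq> 0\<close>, of n E] assms(1,2,4)
    by (simp add: q power_int_diff carrier_matD[OF D_mat_carrier])
qed

end
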